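(* Assume (A). Then for all $t>t_0$ and $s\in(0,t)$, $$\inf_{f\in\mathcal U^{s,t}}I(f)=\Upsilon(s,t):=\begin{cases}\Lambda_{s,t}(b+c_2t,\ b+c_2t-c_1s), & \text{if } k(s,t)>c_1s,\\[2pt] \dfrac{(b+c_2t)^2}{2v(t)}, & \text{if } k(s,t)\le c_1s.\end{cases}$$
   Context: Let $v:[0,\infty)\to[0,\infty)$ be continuous with $v(0)=0$ and $\lim_{t\to\infty}v(t)/t^{\alpha}=0$ for some $\alpha<2$; $A$ is a centered Gaussian process on $\mathbb R$ with continuous paths, $A(0)=0$, stationary increments and $\mathrm{Var}(A(t)-A(s))=v(|t-s|)$; $\Gamma(s,t):=\tfrac12(v(|s|)+v(|t|)-v(|t-s|))$. $\Omega$ is the space of continuous $\omega:\mathbb R\to\mathbb R$ with $\omega(0)=0$, $\omega(t)/(1+|t|)\to0$ as $t\to\pm\infty$; $R$ is the reproducing kernel Hilbert space of $\Gamma$ and $I(\omega)=\frac12\|\omega\|_R^2$ on $R$, $\infty$ elsewhere. Fix $b>0$, $c_1>c_2>0$, $t_0:=b/(c_1-c_2)$, and $\mathcal U^{s,t}:=\{f\in\Omega:-f(-t)\ge b+c_2t,\ f(-s)-f(-t)\ge b+c_2t-c_1s\}$. For $0<s<t$ let $\Sigma(s,t):=\begin{pmatrix}v(t)&\Gamma(s,t)\\ \Gamma(s,t)&v(s)\end{pmatrix}$, assumed nonsingular, and $\Lambda_{s,t}(y,z):=\frac12(y,z)\,\Sigma(t-s,t)^{-1}(y,z)^{\top}$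 (the large-deviation rate function of the pair $(\frac1n\sum_iA_i(-t,0),\frac1n\sum_iA_i(-t,-s))$). Let $k(s,t):=\mathbb E(A(s)\mid A(t)=b+c_2t)=\frac{\Gamma(s,t)}{v(t)}(b+c_2t)$. Assumption (A): $\sqrt{v}\in C^2([0,\infty))$ and $\sqrt v$ is strictly increasing and strictly concave. *)

theory Defs
  imports "HOL-Probability.Probability"
begin

definition Gam :: "(real \<Rightarrow> real) \<Rightarrow> real \<Rightarrow> real \<Rightarrow> real" where
  "Gam v s t = (v \<bar>s\<bar> + v \<bar>t\<bar> - v \<bar>t - s\<bar>) / 2"

text \<open>A is a centered Gaussian process on (M), indexed by the reals, with continuous
  paths, A(0)=0 and covariance kernel K: every finite linear combination
  sum c_i A(t_i) is a centered normal variable with variance sum c_i c_j K(t_i,t_j)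
  (stated through its characteristic function, which also covers variance 0).\<close>
definition centered_gaussian_process ::
    "'a measure \<Rightarrow> (real \<Rightarrow> 'a \<Rightarrow> real) \<Rightarrow> (real \<Rightarrow> real \<Rightarrow> real) \<Rightarrow> bool" where
  "centered_gaussian_process M A K \<longleftrightarrow>
     prob_space M \<and>
     (\<forall>t. A t \<in> borel_measurable M) \<and>
     (\<forall>\<omega>\<in>space M. continuous_on UNIV (\<lambda>t. A t \<omega>) \<and> A 0 \<omega> = 0) \<and>
     (\<forall>(F::real set) (c::real \<Rightarrow> real). finite F \<longrightarrow>
        (\<forall>u. char (distr M borel (\<lambda>\<omega>. \<Sum>t\<in>F. c t * A t \<omega>)) u =
             complex_of_real (exp (- ((\<Sum>p\<in>F. \<Sum>q\<in>F. c p * c q * K p q) * u\<^sup>2 / 2)))))"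

definition Omega :: "(real \<Rightarrow> real) set" where
  "Omega = {\<omega>. continuous_on UNIV \<omega> \<and> \<omega> 0 = 0 \<and>
              ((\<lambda>t. \<omega> t / (1 + \<bar>t\<bar>)) \<longlongrightarrow> 0) at_top \<and>
              ((\<lambda>t. \<omega> t / (1 + \<bar>t\<bar>)) \<longlongrightarrow> 0) at_bot}"

text \<open>Squared RKHS norm of f for the positive semidefinite kernel K (Aronszajn/Loeve):
  the supremum of (sum c_i f(t_i))^2 / (sum c_i c_j K(t_i,t_j)) over finite families,
  with the convention 0/0 = 0 and a/0 = infinity for a > 0.  It is finite iff f lies
  in the RKHS of K, and then it equals the squared RKHS norm.\<close>
definition rkhs_sq_norm :: "(real \<Rightarrow> real \<Rightarrow> real) \<Rightarrow> (real \<Rightarrow> real) \<Rightarrow> ereal" where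
  "rkhs_sq_norm K f =
     (SUP Fc \<in> {(F::real set, c::real \<Rightarrow> real). finite F}.
        (let F = fst Fc; c = snd Fc;
             L = (\<Sum>t\<in>F. c t * f t);
             Q = (\<Sum>p\<in>F. \<Sum>q\<in>F. c p * c q * K p q)
         in if Q = 0 then (if L = 0 then 0 else \<infinity>) else ereal (L\<^sup>2 / Q)))"

text \<open>The rate function I: half the squared RKHS norm of Gamma on Omega,
  infinity outside (R is contained in Omega; outside R the norm is infinite).\<close>
definition rateI :: "(real \<Rightarrow> real) \<Rightarrow> (real \<Rightarrow> real) \<Rightarrow> ereal" where
  "rateI v f = (if f \<in> Omega then rkhs_sq_norm (Gam v) f / 2 else \<infinity>)"

definition Uset :: "real \<Rightarrow> real \<Rightarrow> real \<Rightarrow> real \<Rightarrow> real \<Rightarrow> (real \<Rightarrow> real) set" where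
  "Uset b c1 c2 s t = {f \<in> Omega. - f (- t) \<ge> b + c2 * t \<and>
                                  f (- s) - f (- t) \<ge> b + c2 * t - c1 * s}"

text \<open>Determinant of Sigma(s,t) = [[v t, Gamma(s,t)],[Gamma(s,t), v s]].\<close>
definition detSigma :: "(real \<Rightarrow> real) \<Rightarrow> real \<Rightarrow> real \<Rightarrow> real" where
  "detSigma v s t = v t * v s - (Gam v s t)\<^sup>2"

text \<open>Lambda_{s,t}(y,z) = 1/2 (y,z) Sigma(t-s,t)^{-1} (y,z)^T, with the 2x2 inverse written out.\<close>
definition Lam :: "(real \<Rightarrow> real) \<Rightarrow> real \<Rightarrow> real \<Rightarrow> real \<Rightarrow> real \<Rightarrow> real" where
  "Lam v s t y z =
     (v (t - s) * y\<^sup>2 - 2 * Gam v (t - s) t * y * z + v t * z\<^sup>2) / (2 * detSigma v (t - s) t)"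

definition kfun :: "(real \<Rightarrow> real) \<Rightarrow> real \<Rightarrow> real \<Rightarrow> real \<Rightarrow> real \<Rightarrow> real" where
  "kfun v b c2 s t = Gam v s t / v t * (b + c2 * t)"

definition Upsilon :: "(real \<Rightarrow> real) \<Rightarrow> real \<Rightarrow> real \<Rightarrow> real \<Rightarrow> real \<Rightarrow> real \<Rightarrow> real" where
  "Upsilon v b c1 c2 s t =
     (if kfun v b c2 s t > c1 * s then Lam v s t (b + c2 * t) (b + c2 * t - c1 * s)
      else (b + c2 * t)\<^sup>2 / (2 * v t))"

definition assumptionA :: "(real \<Rightarrow> real) \<Rightarrow> bool" where
  "assumptionA v \<longleftrightarrow>
     (\<exists>g1 g2. (\<forall>x\<ge>0. ((\<lambda>y. sqrt (v y)) has_real_derivative g1 x) (at x within {0..}) \<and>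
                      (g1 has_real_derivative g2 x) (at x within {0..})) \<and>
              continuous_on {0..} g2) \<and>
     strict_mono_on {0..} (\<lambda>y. sqrt (v y)) \<and>
     (\<forall>x\<ge>0. \<forall>y\<ge>0. \<forall>\<theta>. x \<noteq> y \<and> 0 < \<theta> \<and> \<theta> < 1 \<longrightarrow>
        sqrt (v (\<theta> * x + (1 - \<theta>) * y)) > \<theta> * sqrt (v x) + (1 - \<theta>) * sqrt (v y))"

end

theory Submission
  imports Defs
begin

(* The rate is half the squared RKHS norm, i.e. the supremum of (sum c_x f x)^2 / (c' Gam c) over
   finite coefficient families, and the constraints only involve X f = - f (-t) and
   Y f = f (-s) - f (-t), whose Gram matrix is Sigma(t-s,t). The two-point family representing
   a X + b Y bounds the rate from below by (a X f + b Y f)^2 / (2 Q(a,b)), Q the quadratic form of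
   Sigma; conversely, by Cauchy-Schwarz for the covariance kernel, the kernel combination with the
   same coefficients has (X, Y) = Sigma (a,b) and rate at most Q(a,b)/2. Hence nonnegative weights
   (a,b) for which a multiple of Sigma (a,b) meets both constraints are optimal: (1,0) when
   k(s,t) <= c1 s, and adj(Sigma) (b + c2 t, b + c2 t - c1 s) otherwise. The first entry of the
   latter is nonnegative because concavity of sqrt v bounds the regression slope
   Gam(t-s,t) / v(t-s) by t / (t-s), while t > t0 gives (b + c2 t - c1 s) t <= (b + c2 t) (t - s). *)

section \<open>Positive semidefinite kernels and the RKHS norm\<close>

definition psd_kernel :: "(real \<Rightarrow> real \<Rightarrow> real) \<Rightarrow> bool" where
  "psd_kernel K \<longleftrightarrow> (\<forall>F c. finite F \<longrightarrow> 0 \<le> (\<Sum>p\<in>F. \<Sum>q\<in>F. c p * c q * K p q))"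

lemma psd_kernelD: "psd_kernel K \<Longrightarrow> finite F \<Longrightarrow> 0 \<le> (\<Sum>p\<in>F. \<Sum>q\<in>F. c p * c q * K p q)"
  unfolding psd_kernel_def by blast

lemma centered_gaussian_process_psd_kernel:
  assumes "centered_gaussian_process M A K"
  shows "psd_kernel K"
  unfolding psd_kernel_def
proof (intro allI impI)
  fix F :: "real set" and c :: "real \<Rightarrow> real"
  assume "finite F"
  let ?S = "\<lambda>\<omega>. \<Sum>t\<in>F. c t * A t \<omega>"
  let ?Q = "\<Sum>p\<in>F. \<Sum>q\<in>F. c p * c q * K p q"
  have "prob_space M" and "\<And>t. A t \<in> borel_measurable M"
    and char: "char (distr M borel ?S) 1 = complex_of_real (exp (- (?Q * 1\<^sup>2 / 2)))"
    using assms \<open>finite F\<close> unfolding centered_gaussian_process_def by blast+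
  then have "real_distribution (distr M borel ?S)"
    by (intro prob_space.real_distribution_distr) auto
  then have "norm (char (distr M borel ?S) 1) \<le> 1"
    by (rule real_distribution.cmod_char_le_1)
  then show "0 \<le> ?Q"
    using char by simp
qed

lemma quadratic_nonneg_imp_discriminant_le:
  fixes a b c :: real
  assumes nonneg: "\<And>l. 0 \<le> c + 2 * b * l + a * l\<^sup>2" and "0 \<le> a"
  shows "b\<^sup>2 \<le> a * c"
proof (cases "a = 0")
  case True
  have "0 \<le> c + 2 * b * (- (c + 1) / (2 * b))" if "b \<noteq> 0"
    using nonneg[of "- (c + 1) / (2 * b)"] True by simp
  then show ?thesis
    using True by (cases "b = 0") auto
next
  case False
  with \<open>0 \<le> a\<close> have "0 < a" by simp
  have "0 \<le> c + 2 * b * (- b / a) + a * (- b / a)\<^sup>2"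
    by (rule nonneg)
  also have "\<dots> = c - b\<^sup>2 / a"
    using \<open>0 < a\<close> by (simp add: field_simps power2_eq_square)
  finally show ?thesis
    using \<open>0 < a\<close> by (simp add: field_simps)
qed

lemma double_sum_expand:
  fixes K :: "real \<Rightarrow> real \<Rightarrow> real"
  shows "(\<Sum>p\<in>S. \<Sum>q\<in>S. (d p + l * e p) * (d q + l * e q) * K p q)
    = (\<Sum>p\<in>S. \<Sum>q\<in>S. d p * d q * K p q) + l * (\<Sum>p\<in>S. \<Sum>q\<in>S. d p * e q * K p q)
      + l * (\<Sum>p\<in>S. \<Sum>q\<in>S. e p * d q * K p q) + l\<^sup>2 * (\<Sum>p\<in>S. \<Sum>q\<in>S. e p * e q * K p q)"
proof -
  have "(d p + l * e p) * (d q + l * e q) * K p q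
      = d p * d q * K p q + l * (d p * e q * K p q) + l * (e p * d q * K p q)
        + l\<^sup>2 * (e p * e q * K p q)" for p q
    by (simp add: algebra_simps power2_eq_square)
  then show ?thesis
    by (simp add: sum.distrib sum_distrib_left)
qed

lemma double_sum_zero_extension:
  fixes K :: "real \<Rightarrow> real \<Rightarrow> real"
  assumes "finite S" "F \<subseteq> S" "G \<subseteq> S"
  shows "(\<Sum>p\<in>S. \<Sum>q\<in>S. (if p \<in> F then d p else 0) * (if q \<in> G then e q else 0) * K p q)
    = (\<Sum>p\<in>F. \<Sum>q\<in>G. d p * e q * K p q)"
proof -
  have "(\<Sum>p\<in>S. \<Sum>q\<in>S. (if p \<in> F then d p else 0) * (if q \<in> G then e q else 0) * K p q)
      = (\<Sum>p\<in>S. if p \<in> F then (\<Sum>q\<in>S. if q \<in> G then d p * e q * K p q else 0) else 0)"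
    by (auto intro!: sum.cong)
  also have "\<dots> = (\<Sum>p\<in>F. \<Sum>q\<in>G. d p * e q * K p q)"
    using assms by (simp add: sum.inter_restrict[symmetric] Int_absorb1)
  finally show ?thesis .
qed

lemma psd_kernel_cauchy_schwarz:
  assumes psd: "psd_kernel K" and sym: "\<And>x y. K x y = K y x" and "finite S"
  shows "(\<Sum>p\<in>S. \<Sum>q\<in>S. d p * e q * K p q)\<^sup>2
    \<le> (\<Sum>p\<in>S. \<Sum>q\<in>S. d p * d q * K p q) * (\<Sum>p\<in>S. \<Sum>q\<in>S. e p * e q * K p q)"
proof (rule quadratic_nonneg_imp_discriminant_le)
  have swap: "(\<Sum>p\<in>S. \<Sum>q\<in>S. e p * d q * K p q) = (\<Sum>p\<in>S. \<Sum>q\<in>S. d p * e q * K p q)"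
    by (subst sum.swap) (simp add: sym mult.commute mult.left_commute)
  fix l
  have "0 \<le> (\<Sum>p\<in>S. \<Sum>q\<in>S. (e p + l * d p) * (e q + l * d q) * K p q)"
    by (rule psd_kernelD[OF psd \<open>finite S\<close>])
  then show "0 \<le> (\<Sum>p\<in>S. \<Sum>q\<in>S. e p * e q * K p q) + 2 * (\<Sum>p\<in>S. \<Sum>q\<in>S. d p * e q * K p q) * l
      + (\<Sum>p\<in>S. \<Sum>q\<in>S. d p * d q * K p q) * l\<^sup>2"
    unfolding double_sum_expand swap by (simp add: algebra_simps)
qed (rule psd_kernelD[OF psd \<open>finite S\<close>])

lemma psd_kernel_section_cauchy_schwarz:
  assumes psd: "psd_kernel K" and sym: "\<And>x y. K x y = K y x" and "finite F" "finite G"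
  shows "(\<Sum>x\<in>F. c x * (\<Sum>y\<in>G. \<gamma> y * K y x))\<^sup>2
    \<le> (\<Sum>p\<in>G. \<Sum>q\<in>G. \<gamma> p * \<gamma> q * K p q) * (\<Sum>p\<in>F. \<Sum>q\<in>F. c p * c q * K p q)"
proof -
  define S where "S = F \<union> G"
  define c' where "c' x = (if x \<in> F then c x else 0)" for x
  define \<gamma>' where "\<gamma>' x = (if x \<in> G then \<gamma> x else 0)" for x
  have S: "finite S" "F \<subseteq> S" "G \<subseteq> S"
    using assms by (auto simp: S_def)
  have "(\<Sum>x\<in>F. c x * (\<Sum>y\<in>G. \<gamma> y * K y x)) = (\<Sum>p\<in>G. \<Sum>q\<in>F. \<gamma> p * c q * K p q)"
    by (subst sum.swap) (simp add: sum_distrib_left mult.commute mult.left_commute)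
  also have "\<dots> = (\<Sum>p\<in>S. \<Sum>q\<in>S. \<gamma>' p * c' q * K p q)"
    unfolding \<gamma>'_def c'_def using S by (simp add: double_sum_zero_extension)
  finally show ?thesis
    using psd_kernel_cauchy_schwarz[OF psd sym \<open>finite S\<close>, of \<gamma>' c'] S
    by (simp add: \<gamma>'_def c'_def double_sum_zero_extension)
qed

lemma psd_kernel_sq_le:
  assumes "psd_kernel K" and "\<And>x y. K x y = K y x"
  shows "(K x y)\<^sup>2 \<le> K x x * K y y"
  using psd_kernel_section_cauchy_schwarz[OF assms, of "{y}" "{x}" "\<lambda>_. 1" "\<lambda>_. 1"] by simp

lemma rkhs_sq_norm_ge:
  assumes "finite F" and "0 < (\<Sum>p\<in>F. \<Sum>q\<in>F. c p * c q * K p q)"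
  shows "ereal ((\<Sum>x\<in>F. c x * f x)\<^sup>2 / (\<Sum>p\<in>F. \<Sum>q\<in>F. c p * c q * K p q)) \<le> rkhs_sq_norm K f"
  unfolding rkhs_sq_norm_def
  by (rule SUP_upper2[where i = "(F, c)"]) (use assms in \<open>auto simp: Let_def\<close>)

lemma rkhs_sq_norm_kernel_sum_le:
  assumes psd: "psd_kernel K" and sym: "\<And>x y. K x y = K y x" and "finite G"
  shows "rkhs_sq_norm K (\<lambda>x. \<Sum>y\<in>G. \<gamma> y * K y x) \<le> ereal (\<Sum>p\<in>G. \<Sum>q\<in>G. \<gamma> p * \<gamma> q * K p q)"
proof -
  define N where "N = (\<Sum>p\<in>G. \<Sum>q\<in>G. \<gamma> p * \<gamma> q * K p q)"
  have bound: "(if Q = 0 then if L = 0 then 0 else \<infinity> else ereal (L\<^sup>2 / Q)) \<le> ereal N"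
    if "finite F" and L: "L = (\<Sum>x\<in>F. c x * (\<Sum>y\<in>G. \<gamma> y * K y x))"
      and Q: "Q = (\<Sum>p\<in>F. \<Sum>q\<in>F. c p * c q * K p q)" for F c L Q
  proof -
    have "L\<^sup>2 \<le> N * Q" and "0 \<le> N" and "0 \<le> Q"
      unfolding L N_def Q
      using psd_kernel_section_cauchy_schwarz[OF psd sym \<open>finite F\<close> \<open>finite G\<close>]
        psd_kernelD[OF psd] \<open>finite F\<close> \<open>finite G\<close> by blast+
    then show ?thesis
      by (auto simp: divide_le_eq mult.commute)
  qed
  show ?thesis
    unfolding rkhs_sq_norm_def N_def[symmetric]
    by (rule SUP_least, clarify, unfold Let_def prod.sel) (rule bound; simp)
qed

(* Q is the quadratic form of the Gram matrix of the functionals - f P and f S - f P. *)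
lemma rkhs_sq_norm_two_point_ge:
  fixes K :: "real \<Rightarrow> real \<Rightarrow> real" and a b P S :: real
  defines "Q \<equiv> a\<^sup>2 * K P P + 2 * a * b * (K P P - K P S) + b\<^sup>2 * (K P P - 2 * K P S + K S S)"
  assumes sym: "\<And>x y. K x y = K y x" and "P \<noteq> S" and "0 < Q"
  shows "ereal ((a * - f P + b * (f S - f P))\<^sup>2 / Q) \<le> rkhs_sq_norm K f"
proof -
  define c where "c x = (if x = P then - (a + b) else b)" for x
  have "(\<Sum>p\<in>{P, S}. \<Sum>q\<in>{P, S}. c p * c q * K p q) = Q"
    using \<open>P \<noteq> S\<close> sym[of S P] by (simp add: c_def Q_def power2_eq_square algebra_simps)
  moreover have "(\<Sum>x\<in>{P, S}. c x * f x) = a * - f P + b * (f S - f P)"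
    using \<open>P \<noteq> S\<close> by (simp add: c_def algebra_simps)
  ultimately show ?thesis
    using rkhs_sq_norm_ge[of "{P, S}" c K f] \<open>0 < Q\<close> by simp
qed

lemma rkhs_sq_norm_two_point_le:
  fixes K :: "real \<Rightarrow> real \<Rightarrow> real" and a b P S :: real
  defines "Q \<equiv> a\<^sup>2 * K P P + 2 * a * b * (K P P - K P S) + b\<^sup>2 * (K P P - 2 * K P S + K S S)"
  assumes psd: "psd_kernel K" and sym: "\<And>x y. K x y = K y x" and "P \<noteq> S"
  shows "rkhs_sq_norm K (\<lambda>x. b * K S x - (a + b) * K P x) \<le> ereal Q"
proof -
  define c where "c x = (if x = P then - (a + b) else b)" for x
  have "(\<Sum>p\<in>{P, S}. \<Sum>q\<in>{P, S}. c p * c q * K p q) = Q"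
    using \<open>P \<noteq> S\<close> sym[of S P] by (simp add: c_def Q_def power2_eq_square algebra_simps)
  moreover have "(\<lambda>x. \<Sum>y\<in>{P, S}. c y * K y x) = (\<lambda>x. b * K S x - (a + b) * K P x)"
    using \<open>P \<noteq> S\<close> by (simp add: c_def algebra_simps)
  ultimately show ?thesis
    using rkhs_sq_norm_kernel_sum_le[OF psd sym, of "{P, S}" c] by simp
qed

section \<open>Kernel sections as paths\<close>

lemma Omega_scale:
  assumes "f \<in> Omega"
  shows "(\<lambda>x. a * f x) \<in> Omega"
proof -
  have "((\<lambda>x. a * f x / (1 + \<bar>x\<bar>)) \<longlongrightarrow> 0) F" if "((\<lambda>x. f x / (1 + \<bar>x\<bar>)) \<longlongrightarrow> 0) F" for F
    using tendsto_mult_right_zero[OF that, of a] by simp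
  then show ?thesis
    using assms unfolding Omega_def by (auto intro: continuous_intros)
qed

lemma Omega_diff:
  assumes "f \<in> Omega" and "g \<in> Omega"
  shows "(\<lambda>x. f x - g x) \<in> Omega"
proof -
  have "((\<lambda>x. (f x - g x) / (1 + \<bar>x\<bar>)) \<longlongrightarrow> 0) F"
    if "((\<lambda>x. f x / (1 + \<bar>x\<bar>)) \<longlongrightarrow> 0) F" and "((\<lambda>x. g x / (1 + \<bar>x\<bar>)) \<longlongrightarrow> 0) F" for F
    using tendsto_diff[OF that] by (simp add: diff_divide_distrib)
  then show ?thesis
    using assms unfolding Omega_def by (auto intro: continuous_intros)
qed

lemma Gam_sym: "Gam v x y = Gam v y x"
  unfolding Gam_def by (simp add: abs_minus_commute add.commute)

lemma Gam_diag: "v 0 = 0 \<Longrightarrow> Gam v x x = v \<bar>x\<bar>"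
  unfolding Gam_def by simp

lemma sqrt_sublinear_at_top:
  assumes nonneg: "\<forall>x\<ge>0. 0 \<le> v x" and growth: "\<exists>\<alpha><2. ((\<lambda>x. v x / x powr \<alpha>) \<longlongrightarrow> 0) at_top"
  shows "((\<lambda>y. sqrt (v y) / (1 + y)) \<longlongrightarrow> 0) at_top"
proof -
  obtain \<alpha> where "\<alpha> < 2" and lim: "((\<lambda>x. v x / x powr \<alpha>) \<longlongrightarrow> 0) at_top"
    using growth by blast
  show ?thesis
  proof (rule Lim_null_comparison)
    show "((\<lambda>x. sqrt (v x / x powr \<alpha>)) \<longlongrightarrow> 0) at_top"
      using tendsto_real_sqrt[OF lim] by simp
    show "\<forall>\<^sub>F y in at_top. norm (sqrt (v y) / (1 + y)) \<le> sqrt (v y / y powr \<alpha>)"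
      using eventually_ge_at_top[of "1::real"]
    proof eventually_elim
      case (elim y)
      have "sqrt (y powr \<alpha>) = y powr (\<alpha> / 2)"
        using elim by (simp add: powr_half_sqrt[symmetric] powr_powr)
      moreover have "y powr (\<alpha> / 2) \<le> 1 + y"
        using elim \<open>\<alpha> < 2\<close> powr_mono[of "\<alpha> / 2" 1 y] by simp
      ultimately show ?case
        using elim nonneg by (simp add: real_sqrt_divide divide_left_mono)
    qed
  qed
qed

lemma Gam_section_in_Omega:
  assumes psd: "psd_kernel (Gam v)" and cont: "continuous_on {0..} v" and v0: "v 0 = 0"
    and nonneg: "\<forall>x\<ge>0. 0 \<le> v x" and growth: "\<exists>\<alpha><2. ((\<lambda>x. v x / x powr \<alpha>) \<longlongrightarrow> 0) at_top"
  shows "Gam v y \<in> Omega"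
proof -
  have bound: "\<bar>Gam v y x\<bar> \<le> sqrt (v \<bar>y\<bar>) * sqrt (v \<bar>x\<bar>)" for x
    using real_sqrt_le_mono[OF psd_kernel_sq_le[OF psd Gam_sym, of y x]]
    by (simp add: Gam_diag[of v, OF v0] real_sqrt_mult)
  have lim: "((\<lambda>x. Gam v y x / (1 + \<bar>x\<bar>)) \<longlongrightarrow> 0) F"
    if F: "filterlim (\<lambda>x. \<bar>x\<bar>) at_top F" for F
  proof (rule Lim_null_comparison)
    show "((\<lambda>x. sqrt (v \<bar>y\<bar>) * (sqrt (v \<bar>x\<bar>) / (1 + \<bar>x\<bar>))) \<longlongrightarrow> 0) F"
      by (rule tendsto_mult_right_zero,
          rule filterlim_compose[OF sqrt_sublinear_at_top[OF nonneg growth] F])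
    show "\<forall>\<^sub>F x in F. norm (Gam v y x / (1 + \<bar>x\<bar>)) \<le> sqrt (v \<bar>y\<bar>) * (sqrt (v \<bar>x\<bar>) / (1 + \<bar>x\<bar>))"
      using bound by (intro always_eventually) (simp add: divide_right_mono)
  qed
  have "filterlim (\<lambda>x::real. \<bar>x\<bar>) at_top at_bot"
    by (simp add: filterlim_at_bot_mirror filterlim_abs_real)
  moreover have "continuous_on UNIV (Gam v y)"
    unfolding Gam_def
    by (intro continuous_intros continuous_on_compose2[OF cont]) auto
  ultimately show ?thesis
    unfolding Omega_def using lim filterlim_abs_real by (auto simp: Gam_def v0)
qed

section \<open>Concavity of the standard deviation\<close>

lemma assumptionA_concave:
  assumes "assumptionA v"
  shows "concave_on {0..} (\<lambda>x. sqrt (v x))"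
proof (rule concave_on_linorderI)
  have strict: "\<forall>x\<ge>0. \<forall>y\<ge>0. \<forall>\<theta>. x \<noteq> y \<and> 0 < \<theta> \<and> \<theta> < 1 \<longrightarrow>
      sqrt (v (\<theta> * x + (1 - \<theta>) * y)) > \<theta> * sqrt (v x) + (1 - \<theta>) * sqrt (v y)"
    using assms unfolding assumptionA_def by (elim conjE)
  fix \<theta> x y :: real
  assume "0 < \<theta>" "\<theta> < 1" "x \<in> {0..}" "y \<in> {0..}" "x < y"
  then show "(1 - \<theta>) * sqrt (v x) + \<theta> * sqrt (v y) \<le> sqrt (v ((1 - \<theta>) *\<^sub>R x + \<theta> *\<^sub>R y))"
    using strict[rule_format, of x y "1 - \<theta>"] by simp
qed (rule convex_real_interval)

lemma assumptionA_mono: "assumptionA v \<Longrightarrow> mono_on {0..} (\<lambda>x. sqrt (v x))"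
  unfolding assumptionA_def by (elim conjE) (rule strict_mono_on_imp_mono_on)

lemma concave_on_scale_ge:
  fixes h :: "real \<Rightarrow> real"
  assumes "concave_on {0..} h" "0 \<le> h 0" "0 \<le> x" "0 \<le> l" "l \<le> 1"
  shows "l * h x \<le> h (l * x)"
proof -
  have "(1 - l) * h 0 + l * h x \<le> h (l * x)"
    using concave_onD[OF assms(1), of l 0 x] assms(3-) by simp
  moreover have "0 \<le> (1 - l) * h 0"
    using assms(2,5) by simp
  ultimately show ?thesis
    by linarith
qed

lemma concave_on_subadditive:
  fixes h :: "real \<Rightarrow> real"
  assumes concave: "concave_on {0..} h" and "0 \<le> h 0" "0 \<le> a" "0 \<le> b"
  shows "h (a + b) \<le> h a + h b"
proof (cases "a + b = 0")
  case True
  with assms have "a = 0" "b = 0"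
    by auto
  then show ?thesis
    using assms by simp
next
  case False
  with assms have "0 < a + b"
    by simp
  have "a / (a + b) * h (a + b) + b / (a + b) * h (a + b) \<le> h a + h b"
    using concave_on_scale_ge[OF concave \<open>0 \<le> h 0\<close>, of "a + b" "a / (a + b)"]
      concave_on_scale_ge[OF concave \<open>0 \<le> h 0\<close>, of "a + b" "b / (a + b)"]
      \<open>0 < a + b\<close> assms by (simp add: add_mono)
  also have "a / (a + b) * h (a + b) + b / (a + b) * h (a + b) = h (a + b)"
    using \<open>0 < a + b\<close> by (simp flip: distrib_right add_divide_distrib)
  finally show ?thesis .
qed

lemma concave_on_ratio_le:
  fixes h :: "real \<Rightarrow> real"
  assumes "concave_on {0..} h" "0 \<le> h 0" "0 < a" "a \<le> b"
  shows "a * h b \<le> b * h a"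
  using concave_on_scale_ge[OF assms(1,2), of b "a / b"] assms(3,4) by (simp add: field_simps)

lemma concave_sq_increment_le:
  fixes h :: "real \<Rightarrow> real"
  assumes concave: "concave_on {0..} h" and nonneg: "\<forall>x\<ge>0. 0 \<le> h x" and "0 < u" "0 < s"
  shows "u * ((h (u + s))\<^sup>2 - (h s)\<^sup>2 - (h u)\<^sup>2) \<le> 2 * s * (h u)\<^sup>2"
proof -
  have h0: "0 \<le> h 0" and hu: "0 \<le> h u" and hus: "0 \<le> h (u + s)"
    using nonneg \<open>0 < u\<close> \<open>0 < s\<close> by auto
  show ?thesis
  proof (cases "s \<le> u")
    case True
    have "u * h (u + s) \<le> (u + s) * h u"
      using concave_on_ratio_le[OF concave h0, of u "u + s"] \<open>0 < u\<close> \<open>0 < s\<close> by simp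
    then have "(u * h (u + s))\<^sup>2 \<le> ((u + s) * h u)\<^sup>2"
      using \<open>0 < u\<close> hus by (intro power_mono) auto
    moreover have "(s * h u)\<^sup>2 \<le> (u * h s)\<^sup>2"
      using concave_on_ratio_le[OF concave h0 \<open>0 < s\<close> True] \<open>0 < s\<close> hu by (intro power_mono) auto
    ultimately have "u * (u * ((h (u + s))\<^sup>2 - (h s)\<^sup>2 - (h u)\<^sup>2)) \<le> u * (2 * s * (h u)\<^sup>2)"
      by (simp add: power_mult_distrib algebra_simps power2_eq_square)
    then show ?thesis
      using \<open>0 < u\<close> by simp
  next
    case False
    have "u * h s \<le> s * h u"
      using concave_on_ratio_le[OF concave h0 \<open>0 < u\<close>] False by simp
    have "(h (u + s))\<^sup>2 \<le> (h u + h s)\<^sup>2"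
      using concave_on_subadditive[OF concave h0, of u s] \<open>0 < u\<close> \<open>0 < s\<close> hus
      by (intro power_mono) auto
    then have "u * (h (u + s))\<^sup>2 \<le> u * (h u + h s)\<^sup>2"
      using \<open>0 < u\<close> by (intro mult_left_mono) auto
    then have "u * ((h (u + s))\<^sup>2 - (h s)\<^sup>2 - (h u)\<^sup>2) \<le> 2 * h u * (u * h s)"
      by (simp add: power2_eq_square algebra_simps)
    also have "\<dots> \<le> 2 * h u * (s * h u)"
      using \<open>u * h s \<le> s * h u\<close> hu by (intro mult_left_mono) auto
    finally show ?thesis
      by (simp add: power2_eq_square algebra_simps)
  qed
qed

(* Gam v u t / v u is the regression slope of A(t) on A(u). *)
lemma Gam_slope_le:
  assumes "concave_on {0..} (\<lambda>x. sqrt (v x))" and "\<forall>x\<ge>0. 0 \<le> v x" and "0 < u" "u < t"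
  shows "u * Gam v u t \<le> t * v u"
proof -
  have "u * (v t - v (t - u) - v u) \<le> 2 * (t - u) * v u"
    using concave_sq_increment_le[OF assms(1), of u "t - u"] assms by simp
  then show ?thesis
    using assms by (simp add: Gam_def algebra_simps)
qed

lemma Gam_nonneg:
  assumes "mono_on {0..} (\<lambda>x. sqrt (v x))" and nonneg: "\<forall>x\<ge>0. 0 \<le> v x" and "0 \<le> u" "u \<le> t"
  shows "0 \<le> Gam v u t"
proof -
  have "v (t - u) \<le> v t"
    using mono_onD[OF assms(1), of "t - u" t] assms by simp
  moreover have "0 \<le> v u"
    using nonneg \<open>0 \<le> u\<close> by simp
  moreover have "Gam v u t = (v u + v t - v (t - u)) / 2"
    using assms by (simp add: Gam_def)
  ultimately show ?thesis
    by simp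
qed

lemma Gam_mul_le_var_mul:
  assumes concave: "concave_on {0..} (\<lambda>x. sqrt (v x))" and mono: "mono_on {0..} (\<lambda>x. sqrt (v x))"
    and nonneg: "\<forall>x\<ge>0. 0 \<le> v x" and "0 < u" "u < t" "0 \<le> B" "Z * t \<le> B * u"
  shows "Gam v u t * Z \<le> v u * B"
proof -
  have "Gam v u t * (Z * t) \<le> Gam v u t * (B * u)"
    using Gam_nonneg[OF mono nonneg] assms by (intro mult_left_mono) auto
  also have "\<dots> = B * (u * Gam v u t)"
    by simp
  also have "\<dots> \<le> B * (t * v u)"
    using Gam_slope_le[OF concave nonneg] assms by (intro mult_left_mono) auto
  finally have "(Gam v u t * Z) * t \<le> (v u * B) * t"
    by (simp add: algebra_simps)
  then show ?thesis
    using assms by simp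
qed

section \<open>Minimising a Gaussian rate over a quadrant\<close>

(* lower and upper abstract the rate of a pair (X, Y) with covariance [[q, g], [g, p]]: weights
   (a, b) bound it from below, and are realised by an element with (X, Y) = Sigma (a, b). *)
lemma INF_quadrant_dual_certificate:
  fixes R :: "'f \<Rightarrow> ereal" and X Y :: "'f \<Rightarrow> real" and q g p B Z \<alpha> \<beta> :: real
  defines "Q \<equiv> \<lambda>a b. a\<^sup>2 * q + 2 * a * b * g + b\<^sup>2 * p"
  assumes lower: "\<And>f a b. f \<in> V \<Longrightarrow> 0 < Q a b \<Longrightarrow> ereal ((a * X f + b * Y f)\<^sup>2 / (2 * Q a b)) \<le> R f"
    and upper: "\<And>a b. \<exists>f\<in>V. X f = a * q + b * g \<and> Y f = a * g + b * p \<and> R f \<le> ereal (Q a b / 2)"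
    and "0 \<le> \<alpha>" "0 \<le> \<beta>" "0 < Q \<alpha> \<beta>" "0 \<le> \<alpha> * B + \<beta> * Z"
    and feasible: "B \<le> (\<alpha> * B + \<beta> * Z) / Q \<alpha> \<beta> * (\<alpha> * q + \<beta> * g)"
      "Z \<le> (\<alpha> * B + \<beta> * Z) / Q \<alpha> \<beta> * (\<alpha> * g + \<beta> * p)"
  shows "(INF f\<in>{f\<in>V. B \<le> X f \<and> Z \<le> Y f}. R f) = ereal ((\<alpha> * B + \<beta> * Z)\<^sup>2 / (2 * Q \<alpha> \<beta>))"
proof (rule antisym)
  define N where "N = \<alpha> * B + \<beta> * Z"
  define \<kappa> where "\<kappa> = N / Q \<alpha> \<beta>"
  obtain f where "f \<in> V" and fX: "X f = \<kappa> * \<alpha> * q + \<kappa> * \<beta> * g" and fY: "Y f = \<kappa> * \<alpha> * g + \<kappa> * \<beta> * p"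
    and fR: "R f \<le> ereal (Q (\<kappa> * \<alpha>) (\<kappa> * \<beta>) / 2)"
    using upper[of "\<kappa> * \<alpha>" "\<kappa> * \<beta>"] by blast
  have "Q (\<kappa> * \<alpha>) (\<kappa> * \<beta>) = \<kappa>\<^sup>2 * Q \<alpha> \<beta>"
    by (simp add: Q_def power2_eq_square algebra_simps)
  also have "\<dots> = N\<^sup>2 / Q \<alpha> \<beta>"
    using \<open>0 < Q \<alpha> \<beta>\<close> by (simp add: \<kappa>_def power2_eq_square)
  finally have "Q (\<kappa> * \<alpha>) (\<kappa> * \<beta>) = N\<^sup>2 / Q \<alpha> \<beta>" .
  with fR have "R f \<le> ereal (N\<^sup>2 / (2 * Q \<alpha> \<beta>))"
    by (simp add: mult.commute)
  moreover have "X f = \<kappa> * (\<alpha> * q + \<beta> * g)" and "Y f = \<kappa> * (\<alpha> * g + \<beta> * p)"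
    by (simp_all add: fX fY distrib_left mult.assoc)
  then have "f \<in> {f\<in>V. B \<le> X f \<and> Z \<le> Y f}"
    using \<open>f \<in> V\<close> feasible[folded N_def, folded \<kappa>_def] by simp
  ultimately show "(INF f\<in>{f\<in>V. B \<le> X f \<and> Z \<le> Y f}. R f) \<le> ereal ((\<alpha> * B + \<beta> * Z)\<^sup>2 / (2 * Q \<alpha> \<beta>))"
    unfolding N_def by (blast intro: INF_lower2)
next
  show "ereal ((\<alpha> * B + \<beta> * Z)\<^sup>2 / (2 * Q \<alpha> \<beta>)) \<le> (INF f\<in>{f\<in>V. B \<le> X f \<and> Z \<le> Y f}. R f)"
  proof (rule INF_greatest, clarify)
    fix f
    assume "f \<in> V" "B \<le> X f" "Z \<le> Y f"
    then have "\<alpha> * B + \<beta> * Z \<le> \<alpha> * X f + \<beta> * Y f"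
      using \<open>0 \<le> \<alpha>\<close> \<open>0 \<le> \<beta>\<close> by (intro add_mono mult_left_mono)
    then have "(\<alpha> * B + \<beta> * Z)\<^sup>2 / (2 * Q \<alpha> \<beta>) \<le> (\<alpha> * X f + \<beta> * Y f)\<^sup>2 / (2 * Q \<alpha> \<beta>)"
      using \<open>0 \<le> \<alpha> * B + \<beta> * Z\<close> \<open>0 < Q \<alpha> \<beta>\<close> by (intro divide_right_mono power_mono) auto
    then show "ereal ((\<alpha> * B + \<beta> * Z)\<^sup>2 / (2 * Q \<alpha> \<beta>)) \<le> R f"
      using lower[OF \<open>f \<in> V\<close> \<open>0 < Q \<alpha> \<beta>\<close>] by (metis ereal_less_eq(3) order_trans)
  qed
qed

lemma INF_quadrant_closed_form:
  fixes R :: "'f \<Rightarrow> ereal" and X Y :: "'f \<Rightarrow> real" and q g p B Z :: real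
  defines "Q \<equiv> \<lambda>a b. a\<^sup>2 * q + 2 * a * b * g + b\<^sup>2 * p"
  assumes lower: "\<And>f a b. f \<in> V \<Longrightarrow> 0 < Q a b \<Longrightarrow> ereal ((a * X f + b * Y f)\<^sup>2 / (2 * Q a b)) \<le> R f"
    and upper: "\<And>a b. \<exists>f\<in>V. X f = a * q + b * g \<and> Y f = a * g + b * p \<and> R f \<le> ereal (Q a b / 2)"
    and det: "0 < q * p - g\<^sup>2" and "0 \<le> q" and "0 < B" and slope: "g * Z \<le> p * B"
  shows "(INF f\<in>{f\<in>V. B \<le> X f \<and> Z \<le> Y f}. R f) = ereal
    (if g * B < q * Z then (p * B\<^sup>2 - 2 * g * B * Z + q * Z\<^sup>2) / (2 * (q * p - g\<^sup>2))
     else B\<^sup>2 / (2 * q))"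
proof -
  define D where "D = q * p - g\<^sup>2"
  have "0 < D"
    using det by (simp add: D_def)
  have "q \<noteq> 0"
    using det by (intro notI) simp
  with \<open>0 \<le> q\<close> have "0 < q"
    by simp
  note certificate = INF_quadrant_dual_certificate[OF lower[unfolded Q_def] upper[unfolded Q_def],
      unfolded Q_def]
  show ?thesis
  proof (cases "g * B < q * Z")
    case True
    define \<alpha> \<beta> N where "\<alpha> = p * B - g * Z" and "\<beta> = q * Z - g * B"
      and "N = p * B\<^sup>2 - 2 * g * B * Z + q * Z\<^sup>2"
    have "q * N = \<beta>\<^sup>2 + D * B\<^sup>2"
      by (simp add: \<beta>_def N_def D_def power2_eq_square algebra_simps)
    also have "0 < \<beta>\<^sup>2 + D * B\<^sup>2"
      using \<open>0 < D\<close> \<open>0 < B\<close> by (intro add_nonneg_pos) auto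
    finally have "0 < N"
      using \<open>0 < q\<close> by (simp add: zero_less_mult_iff)
    have "\<alpha>\<^sup>2 * q + 2 * \<alpha> * \<beta> * g + \<beta>\<^sup>2 * p = D * N"
      and "\<alpha> * B + \<beta> * Z = N" and "\<alpha> * q + \<beta> * g = D * B" and "\<alpha> * g + \<beta> * p = D * Z"
      by (simp_all add: \<alpha>_def \<beta>_def N_def D_def power2_eq_square algebra_simps)
    then have "(INF f\<in>{f\<in>V. B \<le> X f \<and> Z \<le> Y f}. R f) = ereal (N\<^sup>2 / (2 * (D * N)))"
      using certificate[of \<alpha> \<beta>] slope True \<open>0 < D\<close> \<open>0 < N\<close>
      by (simp add: \<alpha>_def \<beta>_def)
    then show ?thesis
      using True \<open>0 < N\<close> by (simp add: N_def D_def power2_eq_square)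
  next
    case False
    have "(INF f\<in>{f\<in>V. B \<le> X f \<and> Z \<le> Y f}. R f) = ereal (B\<^sup>2 / (2 * q))"
      using certificate[of 1 0] \<open>0 < q\<close> \<open>0 < B\<close> False by (simp add: field_simps mult.commute)
    then show ?thesis
      using False by simp
  qed
qed

section \<open>The two increments of a path\<close>

lemma Gam_increment_quadratic_form:
  fixes v :: "real \<Rightarrow> real" and s t a b :: real
  assumes "v 0 = 0" "0 < s" "s < t"
  shows "a\<^sup>2 * Gam v (- t) (- t) + 2 * a * b * (Gam v (- t) (- t) - Gam v (- t) (- s))
      + b\<^sup>2 * (Gam v (- t) (- t) - 2 * Gam v (- t) (- s) + Gam v (- s) (- s))
    = a\<^sup>2 * v t + 2 * a * b * Gam v (t - s) t + b\<^sup>2 * v (t - s)"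
  using assms by (simp add: Gam_def field_simps)

lemma rateI_ge_two_point:
  fixes v f :: "real \<Rightarrow> real" and a b s t :: real
  defines "Q \<equiv> a\<^sup>2 * v t + 2 * a * b * Gam v (t - s) t + b\<^sup>2 * v (t - s)"
  assumes "v 0 = 0" "0 < s" "s < t" "0 < Q"
  shows "ereal ((a * - f (- t) + b * (f (- s) - f (- t)))\<^sup>2 / (2 * Q)) \<le> rateI v f"
proof (cases "f \<in> Omega")
  case True
  have "ereal ((a * - f (- t) + b * (f (- s) - f (- t)))\<^sup>2 / Q) \<le> rkhs_sq_norm (Gam v) f"
    using rkhs_sq_norm_two_point_ge[where K = "Gam v" and P = "- t" and S = "- s" and a = a and b = b
        and f = f, OF Gam_sym, unfolded Gam_increment_quadratic_form[of v s t a b, OF assms(2-4)]] assms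
    by simp
  then have "ereal ((a * - f (- t) + b * (f (- s) - f (- t)))\<^sup>2 / Q) / 2 \<le> rkhs_sq_norm (Gam v) f / 2"
    by (rule ereal_divide_right_mono) simp
  then show ?thesis
    using True by (simp add: rateI_def mult.commute)
qed (simp add: rateI_def)

lemma rateI_le_two_point:
  fixes v :: "real \<Rightarrow> real" and a b s t :: real
  defines "Q \<equiv> a\<^sup>2 * v t + 2 * a * b * Gam v (t - s) t + b\<^sup>2 * v (t - s)"
  assumes psd: "psd_kernel (Gam v)" and cont: "continuous_on {0..} v" and v0: "v 0 = 0"
    and nonneg: "\<forall>x\<ge>0. 0 \<le> v x" and growth: "\<exists>\<alpha><2. ((\<lambda>x. v x / x powr \<alpha>) \<longlongrightarrow> 0) at_top"
    and "0 < s" "s < t"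
  shows "\<exists>f\<in>Omega. - f (- t) = a * v t + b * Gam v (t - s) t
    \<and> f (- s) - f (- t) = a * Gam v (t - s) t + b * v (t - s) \<and> rateI v f \<le> ereal (Q / 2)"
proof
  define f where "f x = b * Gam v (- s) x - (a + b) * Gam v (- t) x" for x
  show "f \<in> Omega"
    unfolding f_def
    by (intro Omega_diff Omega_scale Gam_section_in_Omega[OF psd cont v0 nonneg growth])
  have "rkhs_sq_norm (Gam v) f \<le> ereal Q"
    using rkhs_sq_norm_two_point_le[where P = "- t" and S = "- s" and a = a and b = b, OF psd Gam_sym]
      \<open>s < t\<close>
    unfolding Gam_increment_quadratic_form[of v s t a b, OF v0 \<open>0 < s\<close> \<open>s < t\<close>] Q_def f_def by simp
  then have "rateI v f \<le> ereal (Q / 2)"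
    using \<open>f \<in> Omega\<close> by (simp add: rateI_def ereal_divide_right_mono[of _ "ereal Q" 2, simplified])
  moreover have "- f (- t) = a * v t + b * Gam v (t - s) t"
    and "f (- s) - f (- t) = a * Gam v (t - s) t + b * v (t - s)"
    using v0 \<open>0 < s\<close> \<open>s < t\<close> by (simp_all add: f_def Gam_def field_simps)
  ultimately show "- f (- t) = a * v t + b * Gam v (t - s) t
    \<and> f (- s) - f (- t) = a * Gam v (t - s) t + b * v (t - s) \<and> rateI v f \<le> ereal (Q / 2)"
    by blast
qed

lemma detSigma_pos:
  assumes "psd_kernel (Gam v)" and "v 0 = 0" and "0 \<le> u" "0 \<le> t" and "detSigma v u t \<noteq> 0"
  shows "0 < detSigma v u t"
  using psd_kernel_sq_le[OF assms(1) Gam_sym, of u t] assms(3-)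
  by (simp add: Gam_diag[of v, OF assms(2)] detSigma_def mult.commute)

lemma Upsilon_eq:
  assumes "0 < detSigma v (t - s) t" "0 \<le> v t" "0 < s" "s < t"
  shows "Upsilon v b c1 c2 s t =
    (if Gam v (t - s) t * (b + c2 * t) < v t * (b + c2 * t - c1 * s)
     then (v (t - s) * (b + c2 * t)\<^sup>2 - 2 * Gam v (t - s) t * (b + c2 * t) * (b + c2 * t - c1 * s)
       + v t * (b + c2 * t - c1 * s)\<^sup>2) / (2 * (v t * v (t - s) - (Gam v (t - s) t)\<^sup>2))
     else (b + c2 * t)\<^sup>2 / (2 * v t))"
proof -
  have "v t \<noteq> 0"
    using assms(1) by (intro notI) (simp add: detSigma_def)
  with \<open>0 \<le> v t\<close> have "0 < v t"
    by simp
  have "Gam v s t = v t - Gam v (t - s) t"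
    using assms by (simp add: Gam_def field_simps)
  then have "kfun v b c2 s t = (v t - Gam v (t - s) t) * (b + c2 * t) / v t"
    by (simp add: kfun_def)
  then have "c1 * s < kfun v b c2 s t
      \<longleftrightarrow> Gam v (t - s) t * (b + c2 * t) < v t * (b + c2 * t - c1 * s)"
    using \<open>0 < v t\<close> by (simp add: pos_less_divide_eq algebra_simps)
  then show ?thesis
    unfolding Upsilon_def Lam_def detSigma_def by simp
qed

theorem lemma3p4:
  fixes v :: "real \<Rightarrow> real" and b c1 c2 s t :: real
  assumes v_cont: "continuous_on {0..} v"
    and v_nonneg: "\<forall>x\<ge>0. v x \<ge> 0"
    and v0: "v 0 = 0"
    and v_growth: "\<exists>\<alpha><2. ((\<lambda>x. v x / x powr \<alpha>) \<longlongrightarrow> 0) at_top"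
    and gp: "\<exists>(M :: 'a measure) A. centered_gaussian_process M A (Gam v)"
    and nonsing: "\<forall>s' t'. 0 < s' \<and> s' < t' \<longrightarrow> detSigma v s' t' \<noteq> 0"
    and A: "assumptionA v"
    and b: "b > 0" and c: "c1 > c2" "c2 > 0"
    and t: "t > b / (c1 - c2)"
    and s: "0 < s" "s < t"
  shows "(INF f \<in> Uset b c1 c2 s t. rateI v f) = ereal (Upsilon v b c1 c2 s t)"
proof -
  have psd: "psd_kernel (Gam v)"
    using gp centered_gaussian_process_psd_kernel by blast
  have det: "0 < detSigma v (t - s) t"
    using detSigma_pos[OF psd v0, of "t - s" t] nonsing s by simp
  have "b + c2 * t < c1 * t"
    using t c by (simp add: pos_divide_less_eq algebra_simps)
  then have "(b + c2 * t) * s \<le> (c1 * t) * s"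
    using s by (intro mult_right_mono) auto
  then have "(b + c2 * t - c1 * s) * t \<le> (b + c2 * t) * (t - s)"
    by (simp add: algebra_simps)
  then have slope: "Gam v (t - s) t * (b + c2 * t - c1 * s) \<le> v (t - s) * (b + c2 * t)"
    using Gam_mul_le_var_mul[OF assumptionA_concave[OF A] assumptionA_mono[OF A] v_nonneg] s b c by simp
  have "0 \<le> v t"
    using v_nonneg s by simp
  show ?thesis
    unfolding Uset_def Upsilon_eq[OF det \<open>0 \<le> v t\<close> s]
    by (rule INF_quadrant_closed_form[OF _ _ det[unfolded detSigma_def] _ _ slope])
      (use rateI_ge_two_point[of v, OF v0 s] rateI_le_two_point[OF psd v_cont v0 v_nonneg v_growth s]
         v_nonneg s b c in \<open>auto intro: add_pos_pos\<close>)
qed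

end
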